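(* For each $n,k\ge1$ there exist constants $A_{n,k},C_{n,k}$ such that if $A=aH-\sum_{i=1}^nb_iE_i\in U_5$ is reduced and satisfies $a>A_{n,k}$, $3a-\sum_{i=1}^{\min\{n,9\}}b_i>C_{n,k}$ and $3a-\sum_{i=1}^nb_i\ge1$, then $A\ge kH-kE_1$. In particular $A$ is not minimal in $U_5$.
   Context: $X=\mathbb{CP}^2\#n\overline{\mathbb{CP}}^2$, $K_0=-3H+E_1+\cdots+E_n$, $\mathrm{ind}(A):=A^2-K_0\cdot A$, $U_5=\{A\in H_2(X;\mathbb{Z}):\mathrm{ind}(A)\ge2k,\ A\cdot H>0\}$ (note $kH-kE_1\in U_5$). With $H^2(X;\mathbb{R})\cong\mathbb{R}^{n+1}$ via $(x_0,\dots,x_n)\leftrightarrow x_0PD(H)-\sum x_iPD(E_i)$, the reduced cone $\mathcal{P}$ is: $0<x_1<x_0$ ($n=1$); $0<x_2\le x_1$, $x_1+x_2<x_0$ ($n=2$); $0<x_n\le\cdots\le x_1$, $x_1+x_2+x_3\le x_0$, $\sum x_i^2<x_0^2$ ($n\ge3$); $\mathcal{P}^{c_1>0}=\{[\omega]\in\mathcal{P}:\omega(3H-\sum E_i)>0\}$. For $A,B\in U_5$, $A\ge B$ means $\omega(A)\ge\omega(B)$ for all $[\omega]\in\mathcal{P}^{c_1>0}$; $A$ is minimal if no other $B\in U_5$ satisfies $A\ge B$. A class $aH-\sum b_iE_i$ is reduced if $a>0$, $b_1\ge\cdots\ge b_n\ge0$, $a\ge b_1+b_2+b_3$. *)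

theory Defs
  imports Complex_Main
begin

text \<open>A homology class A = aH - sum_{i=1}^n b_i E_i of X = CP^2 # n (-CP^2) is encoded
  as a pair (a, bs) with bs = [b_1, ..., b_n]; n = length bs.\<close>

type_synonym hclass = "int \<times> int list"

text \<open>1-indexed coefficient b_i; taken to be 0 outside 1..n.\<close>
definition bco :: "int list \<Rightarrow> nat \<Rightarrow> int" where
  "bco bs i = (if 1 \<le> i \<and> i \<le> length bs then bs ! (i - 1) else 0)"

text \<open>ind(A) = A^2 - K_0.A = (a^2 - sum b_i^2) - (-3a + sum b_i).\<close>
definition ind :: "hclass \<Rightarrow> int" where
  "ind A = (let a = fst A; bs = snd A; n = length bs in
     (a^2 - (\<Sum>i=1..n. (bco bs i)^2)) - (- 3 * a + (\<Sum>i=1..n. bco bs i)))"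

definition U5 :: "nat \<Rightarrow> nat \<Rightarrow> hclass set" where
  "U5 n k = {A. length (snd A) = n \<and> ind A \<ge> 2 * int k \<and> fst A > 0}"

text \<open>Cohomology classes x = (x_0,...,x_n) (only the values at 0..n are used),
  corresponding to x_0 PD(H) - sum x_i PD(E_i).  The reduced cone.\<close>
definition reduced_cone :: "nat \<Rightarrow> (nat \<Rightarrow> real) \<Rightarrow> bool" where
  "reduced_cone n x =
     (if n = 1 then 0 < x 1 \<and> x 1 < x 0
      else if n = 2 then 0 < x 2 \<and> x 2 \<le> x 1 \<and> x 1 + x 2 < x 0
      else 0 < x n \<and> (\<forall>i. 1 \<le> i \<and> i < n \<longrightarrow> x (i + 1) \<le> x i)
           \<and> x 1 + x 2 + x 3 \<le> x 0 \<and> (\<Sum>i=1..n. (x i)^2) < (x 0)^2)"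

text \<open>omega(3H - sum E_i) = 3 x_0 - sum x_i.\<close>
definition reduced_cone_c1pos :: "nat \<Rightarrow> (nat \<Rightarrow> real) \<Rightarrow> bool" where
  "reduced_cone_c1pos n x = (reduced_cone n x \<and> 3 * x 0 - (\<Sum>i=1..n. x i) > 0)"

definition pairing :: "(nat \<Rightarrow> real) \<Rightarrow> hclass \<Rightarrow> real" where
  "pairing x A = x 0 * of_int (fst A) - (\<Sum>i=1..length (snd A). x i * of_int (bco (snd A) i))"

definition cls_ge :: "nat \<Rightarrow> hclass \<Rightarrow> hclass \<Rightarrow> bool" where
  "cls_ge n A B = (\<forall>x. reduced_cone_c1pos n x \<longrightarrow> pairing x A \<ge> pairing x B)"

definition minimal_U5 :: "nat \<Rightarrow> nat \<Rightarrow> hclass \<Rightarrow> bool" where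
  "minimal_U5 n k A = (A \<in> U5 n k \<and> \<not> (\<exists>B \<in> U5 n k. B \<noteq> A \<and> cls_ge n A B))"

definition reduced_class :: "hclass \<Rightarrow> bool" where
  "reduced_class A = (let a = fst A; bs = snd A; n = length bs in
     a > 0 \<and> (\<forall>i. 1 \<le> i \<and> i < n \<longrightarrow> bco bs (i + 1) \<le> bco bs i)
     \<and> (n \<ge> 1 \<longrightarrow> bco bs n \<ge> 0)
     \<and> a \<ge> bco bs 1 + bco bs 2 + bco bs 3)"

definition kclass :: "nat \<Rightarrow> nat \<Rightarrow> hclass" where
  "kclass n k = (int k, int k # replicate (n - 1) 0)"

end

theory Submission
  imports Defs
begin

text \<open>Take A = k and C = 6k. On the reduced cone with c_1 > 0 the partial sums
  x_1 + \<dots> + x_j are at most x_0, j x_0 / 3 or 3 x_0 according as j \<le> 3, 4 \<le> j \<le> 9 or j \<ge> 10.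
  Summation by parts against the nonincreasing coefficients b_i turns this into a lower bound
  for \<omega>(A) - \<omega>(kH - kE_1) by x_0 times a linear form in a, b_1, \<dots>, b_9, which is nonnegative
  because A is reduced and 3a - (b_1 + \<dots> + b_9) > 6k. Since kH - kE_1 lies in U_5 and differs
  from A (as a > k), A is not minimal.\<close>

lemma sum_mult_eq_summation_by_parts:
  fixes c x :: "nat \<Rightarrow> 'a::comm_ring"
  shows "(\<Sum>i=1..n. c i * x i)
    = c (Suc n) * (\<Sum>i=1..n. x i) + (\<Sum>j=1..n. (c j - c (Suc j)) * (\<Sum>i=1..j. x i))"
  by (induction n) (simp_all add: sum.cl_ivl_Suc algebra_simps)

lemma sum_1_to_9:
  fixes f :: "nat \<Rightarrow> 'a::comm_monoid_add"
  shows "(\<Sum>i=1..9. f i) = f 1 + f 2 + f 3 + f 4 + f 5 + f 6 + f 7 + f 8 + f 9"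
  by (simp add: numeral_eq_Suc sum.cl_ivl_Suc add.assoc)

lemma antimono_on_interval:
  fixes f :: "nat \<Rightarrow> 'a::order"
  assumes "\<And>i. m \<le> i \<Longrightarrow> i < n \<Longrightarrow> f (Suc i) \<le> f i" "m \<le> i" "i \<le> j" "j \<le> n"
  shows "f j \<le> f i"
  using assms(3,4)
proof (induction j rule: dec_induct)
  case (step j)
  then show ?case using assms(1)[of j] assms(2) by (simp add: order.trans)
qed simp

text \<open>The three regimes come from x_1 + x_2 + x_3 \<le> x_0, from x_i \<le> x_3 \<le> x_0 / 3 for i > 3,
  and from x_1 + \<dots> + x_n < 3 x_0.\<close>
definition partial_sum_weight :: "nat \<Rightarrow> real" where
  "partial_sum_weight j = (if j \<le> 3 then 1 else if j \<le> 9 then real j / 3 else 3)"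

text \<open>After summation by parts the coefficients c_j - c_{j+1} are nonnegative, and the weights
  telescope to c_1 + (c_4 + \<dots> + c_9) / 3.\<close>
lemma sum_mult_le_by_partial_sum_weight:
  fixes c x :: "nat \<Rightarrow> real" and x0 :: real
  assumes antimono: "\<And>j. 1 \<le> j \<Longrightarrow> c (Suc j) \<le> c j"
    and vanish: "\<And>j. n < j \<Longrightarrow> c j = 0"
    and partial: "\<And>j. 1 \<le> j \<Longrightarrow> j \<le> n \<Longrightarrow> (\<Sum>i=1..j. x i) \<le> partial_sum_weight j * x0"
    and "0 \<le> x0"
  shows "(\<Sum>i=1..n. c i * x i) \<le> x0 * (c 1 + (c 4 + c 5 + c 6 + c 7 + c 8 + c 9) / 3)"
proof -
  define N where "N = max n 9"
  define w where "w = partial_sum_weight"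
  have step: "0 \<le> c j - c (Suc j)" if "1 \<le> j" for j using antimono[OF that] by simp
  have "(\<Sum>i=1..n. c i * x i) = (\<Sum>j=1..n. (c j - c (Suc j)) * (\<Sum>i=1..j. x i))"
    using sum_mult_eq_summation_by_parts[of c x n] vanish[of "Suc n"] by simp
  also have "\<dots> \<le> (\<Sum>j=1..n. (c j - c (Suc j)) * (w j * x0))"
    by (rule sum_mono) (use partial in \<open>auto intro!: mult_left_mono step simp: w_def\<close>)
  also have "\<dots> \<le> (\<Sum>j=1..N. (c j - c (Suc j)) * (w j * x0))"
    by (rule sum_mono2)
      (auto simp: N_def w_def partial_sum_weight_def intro!: mult_nonneg_nonneg step \<open>0 \<le> x0\<close>)
  also have "\<dots> = x0 * (\<Sum>j=1..N. (c j - c (Suc j)) * w j)"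
    by (simp add: sum_distrib_left algebra_simps)
  also have "(\<Sum>j=1..N. (c j - c (Suc j)) * w j)
      = (\<Sum>j=1..9. (c j - c (Suc j)) * w j) + 3 * (\<Sum>j=10..N. c j - c (Suc j))"
  proof -
    have "{1..N} = {1..9} \<union> {10..N}" by (auto simp: N_def)
    then show ?thesis
      by (simp add: sum.union_disjoint sum_distrib_left w_def partial_sum_weight_def algebra_simps)
  qed
  also have "(\<Sum>j=10..N. c j - c (Suc j)) = c 10"
    using sum_Suc_diff[of 10 N "\<lambda>j. - c j"] vanish[of "Suc N"] by (simp add: N_def)
  also have "(\<Sum>j=1..9. (c j - c (Suc j)) * w j) = c 1 + (c 4 + c 5 + c 6 + c 7 + c 8 + c 9) / 3 - 3 * c 10"
    by (simp add: sum_1_to_9 w_def partial_sum_weight_def numeral_eq_Suc algebra_simps)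
  finally show ?thesis by simp
qed

lemma reduced_cone_antimono:
  assumes "reduced_cone n x" "1 \<le> i" "i < n"
  shows "x (Suc i) \<le> x i"
proof (cases "n = 2")
  case True
  then have "i = 1" using assms by simp
  then show ?thesis using assms(1) True by (simp add: reduced_cone_def numeral_2_eq_2)
next
  case False
  then show ?thesis using assms by (auto simp: reduced_cone_def)
qed

lemma reduced_cone_pos:
  assumes "reduced_cone n x" "1 \<le> i" "i \<le> n"
  shows "0 < x i"
proof -
  have "0 < x n" using assms by (auto simp: reduced_cone_def split: if_splits)
  also have "x n \<le> x i"
    by (rule antimono_on_interval[of 1 n x]) (use assms reduced_cone_antimono in auto)
  finally show ?thesis .
qed

lemma reduced_cone_x1_less:
  assumes "reduced_cone n x" "1 \<le> n"
  shows "x 1 < x 0"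
proof (cases "n \<le> 2")
  case True
  then have "n = 1 \<or> n = 2" using assms by auto
  then show ?thesis using assms reduced_cone_pos[OF assms(1), of 2] by (auto simp: reduced_cone_def)
next
  case False
  then have "x 1 + x 2 + x 3 \<le> x 0" using assms by (auto simp: reduced_cone_def)
  then show ?thesis using reduced_cone_pos[OF assms(1), of 2] reduced_cone_pos[OF assms(1), of 3] False
    by simp
qed

lemma reduced_cone_c1pos_partial_sum_le:
  assumes "reduced_cone_c1pos n x" "1 \<le> j" "j \<le> n"
  shows "(\<Sum>i=1..j. x i) \<le> partial_sum_weight j * x 0"
proof -
  have cone: "reduced_cone n x" and c1: "(\<Sum>i=1..n. x i) < 3 * x 0"
    using assms(1) by (auto simp: reduced_cone_c1pos_def)
  note pos = reduced_cone_pos[OF cone]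
  have first3: "x 1 + x 2 + x 3 \<le> x 0" if "3 \<le> n" using cone that by (auto simp: reduced_cone_def)
  consider "j \<le> 3" | "3 < j" "j \<le> 9" | "9 < j" by linarith
  then show ?thesis
  proof cases
    case 1
    show ?thesis
    proof (cases "n < 3")
      case True
      then have "j = 1 \<or> (j = 2 \<and> n = 2)" using assms by auto
      then show ?thesis using cone reduced_cone_x1_less[OF cone] assms True
        by (auto simp: partial_sum_weight_def reduced_cone_def numeral_eq_Suc)
    next
      case False
      have "(\<Sum>i=1..j. x i) \<le> (\<Sum>i=1..3. x i)"
        by (rule sum_mono2) (use 1 False pos in \<open>auto intro: less_imp_le\<close>)
      also have "\<dots> \<le> x 0" using first3 False by (simp add: numeral_eq_Suc)
      finally show ?thesis using 1 by (simp add: partial_sum_weight_def)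
    qed
  next
    case 2
    have "{1..j} = {1..3} \<union> {4..j}" using 2 by auto
    then have "(\<Sum>i=1..j. x i) = (\<Sum>i=1..3. x i) + (\<Sum>i=4..j. x i)"
      by (simp add: sum.union_disjoint)
    also have "(\<Sum>i=4..j. x i) \<le> (\<Sum>i=4..j. x 3)"
      by (rule sum_mono, rule antimono_on_interval[of 1 n x])
        (use assms reduced_cone_antimono[OF cone] in auto)
    also have "(\<Sum>i=1..3. x i) = x 1 + x 2 + x 3" by (simp add: numeral_eq_Suc)
    finally have "(\<Sum>i=1..j. x i) \<le> x 1 + x 2 + x 3 + (real j - 3) * x 3"
      using 2 by simp
    moreover have "x 3 \<le> x 2" "x 2 \<le> x 1"
      using reduced_cone_antimono[OF cone, of 1] reduced_cone_antimono[OF cone, of 2] 2 assms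
      by (simp_all add: numeral_eq_Suc)
    then have "(real j - 3) * x 3 \<le> (real j - 3) * (x 0 / 3)"
      using first3 2 assms by (intro mult_left_mono) auto
    ultimately show ?thesis using first3 2 assms by (simp add: partial_sum_weight_def field_simps)
  next
    case 3
    have "(\<Sum>i=1..j. x i) \<le> (\<Sum>i=1..n. x i)"
      by (rule sum_mono2) (use assms pos in \<open>auto intro: less_imp_le\<close>)
    then show ?thesis using c1 3 by (simp add: partial_sum_weight_def)
  qed
qed

lemma reduced_class_bco_nonneg:
  assumes "reduced_class (a, bs)"
  shows "0 \<le> bco bs i"
proof (cases "1 \<le> i \<and> i \<le> length bs")
  case True
  have "0 \<le> bco bs (length bs)" using assms True by (auto simp: reduced_class_def Let_def)
  also have "\<dots> \<le> bco bs i"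
    by (rule antimono_on_interval[of 1 "length bs"])
      (use assms True in \<open>auto simp: reduced_class_def Let_def\<close>)
  finally show ?thesis .
qed (auto simp: bco_def)

lemma reduced_class_bco_antimono:
  assumes "reduced_class (a, bs)" "1 \<le> j"
  shows "bco bs (Suc j) \<le> bco bs j"
proof (cases "j < length bs")
  case True
  then show ?thesis using assms by (auto simp: reduced_class_def Let_def)
next
  case False
  then show ?thesis using reduced_class_bco_nonneg[OF assms(1), of j] by (simp add: bco_def)
qed

lemma bco_kclass:
  "1 \<le> n \<Longrightarrow> bco (int k # replicate (n - 1) 0) i = (if i = 1 then int k else 0)"
  by (cases i) (auto simp: bco_def nth_Cons nth_replicate split: nat.splits)

lemma pairing_kclass:
  assumes "1 \<le> n"
  shows "pairing x (kclass n k) = (x 0 - x 1) * real k"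
proof -
  have "(\<Sum>i=1..n. x i * of_int (bco (int k # replicate (n - 1) 0) i))
      = (\<Sum>i=1..n. if i = 1 then x 1 * real k else 0)"
    by (rule sum.cong; simp only: bco_kclass[OF assms]; simp)
  then show ?thesis using assms by (simp add: pairing_def kclass_def algebra_simps)
qed

lemma kclass_in_U5:
  assumes "1 \<le> n" "1 \<le> k"
  shows "kclass n k \<in> U5 n k"
proof -
  have "(\<Sum>i=1..n. (bco (int k # replicate (n - 1) 0) i)^2) = (\<Sum>i=1..n. if i = 1 then (int k)^2 else 0)"
    "(\<Sum>i=1..n. bco (int k # replicate (n - 1) 0) i) = (\<Sum>i=1..n. if i = 1 then int k else 0)"
    by (rule sum.cong; simp only: bco_kclass[OF assms(1)]; simp)+
  then have "ind (kclass n k) = 2 * int k"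
    using assms(1) by (simp add: ind_def kclass_def Let_def algebra_simps power2_eq_square)
  then show ?thesis using assms by (simp add: U5_def kclass_def)
qed

text \<open>Lowering b_1 to max (b_1 - k) b_2 keeps the coefficients nonincreasing and absorbs the
  term -k x_1; in either case of the maximum, first3 and first9 give
  c_1 + (c_4 + \<dots> + c_9) / 3 \<le> a - k.\<close>
lemma sum_mult_minus_le_of_reduced:
  fixes b x :: "nat \<Rightarrow> real" and a k :: real
  assumes antimono: "\<And>j. 1 \<le> j \<Longrightarrow> b (Suc j) \<le> b j"
    and vanish: "\<And>j. n < j \<Longrightarrow> b j = 0"
    and first3: "b 1 + b 2 + b 3 \<le> a"
    and first9: "(\<Sum>i=1..9. b i) < 3 * a - 6 * k"
    and cone: "reduced_cone_c1pos n x" and "1 \<le> n"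
  shows "(\<Sum>i=1..n. b i * x i) - k * x 1 \<le> (a - k) * x 0"
proof -
  define c where "c i = (if i = 1 then max (b 1 - k) (b 2) else b i)" for i
  have x1: "0 \<le> x 1" and x0: "0 \<le> x 0"
    using cone reduced_cone_pos[of n x 1] reduced_cone_x1_less[of n x] \<open>1 \<le> n\<close>
    by (auto simp: reduced_cone_c1pos_def)
  have "(\<Sum>i=1..n. b i * x i) - k * x 1 = (\<Sum>i=1..n. b i * x i - (if i = 1 then k * x 1 else 0))"
    using \<open>1 \<le> n\<close> by (simp add: sum_subtractf)
  also have "\<dots> \<le> (\<Sum>i=1..n. c i * x i)"
    using x1 by (intro sum_mono) (auto simp: c_def left_diff_distrib[symmetric] intro!: mult_right_mono)
  also have "\<dots> \<le> x 0 * (c 1 + (c 4 + c 5 + c 6 + c 7 + c 8 + c 9) / 3)"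
  proof (rule sum_mult_le_by_partial_sum_weight[OF _ _ _ x0])
    show "c (Suc j) \<le> c j" if "1 \<le> j" for j
      using that antimono[of j] by (auto simp: c_def numeral_2_eq_2)
    show "c j = 0" if "n < j" for j
      using that vanish[of j] \<open>1 \<le> n\<close> by (simp add: c_def)
    show "(\<Sum>i=1..j. x i) \<le> partial_sum_weight j * x 0" if "1 \<le> j" "j \<le> n" for j
      using reduced_cone_c1pos_partial_sum_le[OF cone that] .
  qed
  also have "\<dots> \<le> x 0 * (a - k)"
  proof (rule mult_left_mono[OF _ x0])
    have "b (Suc j) \<le> b j" if "j \<in> {1..8}" for j using that antimono by simp
    then have "b 2 \<le> b 1" "b 3 \<le> b 2" "b 4 \<le> b 3" "b 5 \<le> b 4" "b 6 \<le> b 5"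
      "b 7 \<le> b 6" "b 8 \<le> b 7" "b 9 \<le> b 8"
      by (simp_all add: numeral_eq_Suc)
    then show "c 1 + (c 4 + c 5 + c 6 + c 7 + c 8 + c 9) / 3 \<le> a - k"
      using first3 first9 unfolding sum_1_to_9 by (simp add: c_def max_def field_simps)
  qed
  finally show ?thesis by (simp add: mult.commute)
qed

lemma cls_ge_kclass:
  assumes "reduced_class (a, bs)" "length bs = n" "1 \<le> n"
    and "6 * real k < of_int (3 * a - (\<Sum>i=1..min n 9. bco bs i))"
  shows "cls_ge n (a, bs) (kclass n k)"
  unfolding cls_ge_def
proof (intro allI impI)
  fix x assume cone: "reduced_cone_c1pos n x"
  define b where "b i = real_of_int (bco bs i)" for i
  have "(\<Sum>i=1..min n 9. bco bs i) = (\<Sum>i=1..9. bco bs i)"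
    by (rule sum.mono_neutral_left) (use assms(2) in \<open>auto simp: bco_def\<close>)
  then have first9: "(\<Sum>i=1..9. b i) < 3 * of_int a - 6 * real k"
    using assms(4) by (simp add: b_def)
  have "(\<Sum>i=1..n. b i * x i) - real k * x 1 \<le> (of_int a - real k) * x 0"
  proof (rule sum_mult_minus_le_of_reduced[OF _ _ _ first9 cone assms(3)])
    show "b (Suc j) \<le> b j" if "1 \<le> j" for j
      using reduced_class_bco_antimono[OF assms(1) that] by (simp add: b_def)
    show "b j = 0" if "n < j" for j using that assms(2) by (simp add: b_def bco_def)
    show "b 1 + b 2 + b 3 \<le> of_int a" using assms(1) by (simp add: b_def reduced_class_def Let_def)
  qed
  moreover have "pairing x (a, bs) = x 0 * of_int a - (\<Sum>i=1..n. b i * x i)"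
    by (simp add: pairing_def b_def assms(2) mult.commute)
  ultimately show "pairing x (kclass n k) \<le> pairing x (a, bs)"
    by (simp add: pairing_kclass[OF assms(3)] algebra_simps)
qed

theorem lemma4p5:
  fixes n k :: nat
  assumes "n \<ge> 1" and "k \<ge> 1"
  shows "\<exists>(Ank :: real) (Cnk :: real). \<forall>a :: int. \<forall>bs :: int list.
           (length bs = n \<and> (a, bs) \<in> U5 n k \<and> reduced_class (a, bs)
            \<and> of_int a > Ank
            \<and> of_int (3 * a - (\<Sum>i=1..min n 9. bco bs i)) > Cnk
            \<and> 3 * a - (\<Sum>i=1..n. bco bs i) \<ge> 1)
           \<longrightarrow> cls_ge n (a, bs) (kclass n k) \<and> \<not> minimal_U5 n k (a, bs)"
proof (rule exI[of _ "real k"], rule exI[of _ "6 * real k"], intro allI impI)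
  fix a :: int and bs :: "int list"
  assume H: "length bs = n \<and> (a, bs) \<in> U5 n k \<and> reduced_class (a, bs)
            \<and> of_int a > real k
            \<and> of_int (3 * a - (\<Sum>i=1..min n 9. bco bs i)) > 6 * real k
            \<and> 3 * a - (\<Sum>i=1..n. bco bs i) \<ge> 1"
  then have ge: "cls_ge n (a, bs) (kclass n k)"
    using cls_ge_kclass assms(1) by blast
  moreover have "kclass n k \<noteq> (a, bs)" using H by (auto simp: kclass_def)
  ultimately have "\<not> minimal_U5 n k (a, bs)"
    using kclass_in_U5[OF assms] by (auto simp: minimal_U5_def)
  with ge show "cls_ge n (a, bs) (kclass n k) \<and> \<not> minimal_U5 n k (a, bs)" by blast
qed

end
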